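(* Let $X$ be a locally compact Hausdorff space, $\zeta$ a quasi-integral on $X$, $O\in\mathcal O(X)$, and $\widehat O=O\cup\{\infty\}$ the one-point compactification of $O$. Let $C_0(\widehat O)=\{f\in C(\widehat O)\mid f(\infty)=0\}$, in which $C_c(O)$ is uniformly dense; since $\zeta|_{C_c(O)}$ is Lipschitz, it has a unique Lipschitz extension $\widehat\zeta_O$ to $C_0(\widehat O)$. For general $f\in C(\widehat O)$ set $\widehat\zeta_O(f)=\widehat\zeta_O(f-f(\infty))+\lambda_O f(\infty)$, where $\lambda_O=\sup\{\zeta(g)\mid g\in C_c(O),\ g\le\mathbf 1_O\}$. Then $\widehat\zeta_O:C(\widehat O)\to\mathbb R$ is a quasi-integral on the compact space $\widehat O$; more precisely it is monotone, Lipschitz, and linear on every subspace $\{\phi\circ f\mid\phi\in C(\mathbb R)\}$, $f\in C(\widehat O)$.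
   Context: $C_c(X)$ denotes real-valued continuous functions with compact support, with the uniform norm; $\mathbf 1_A$ is an indicator function; $\mathcal O(X)$ is the family of open subsets of $X$ with compact closure. A quasi-integral on a locally compact Hausdorff space $X$ is a functional $\eta:C_c(X)\to\mathbb R$ such that: (i) $\eta(f)\le\eta(g)$ whenever $f\le g$; (ii) for every compact $K\subset X$ there is $N_K\ge0$ with $|\eta(f)-\eta(g)|\le N_K\|f-g\|$ for all $f,g$ supported in $K$; (iii) for every $f\in C_c(X)$, $\eta$ is linear on $\{\phi\circ f\mid \phi\in C(\mathbb R),\ \phi(0)=0\}$. *)

theory Defs
  imports "HOL-Analysis.Analysis"
begin

definition supp :: "('a::topological_space \<Rightarrow> real) \<Rightarrow> 'a set" where
  "supp f = {x. f x \<noteq> 0}"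

definition Cc :: "('a::topological_space \<Rightarrow> real) set" where
  "Cc = {f. continuous_on UNIV f \<and> compact (closure (supp f))}"

definition unorm :: "('a \<Rightarrow> real) \<Rightarrow> real" where
  "unorm f = (SUP x. \<bar>f x\<bar>)"

definition quasi_integral :: "(('a::topological_space \<Rightarrow> real) \<Rightarrow> real) \<Rightarrow> bool" where
  "quasi_integral \<eta> \<longleftrightarrow>
     (\<forall>f\<in>Cc. \<forall>g\<in>Cc. (\<forall>x. f x \<le> g x) \<longrightarrow> \<eta> f \<le> \<eta> g) \<and>
     (\<forall>K. compact K \<longrightarrow> (\<exists>N\<ge>0. \<forall>f\<in>Cc. \<forall>g\<in>Cc. supp f \<subseteq> K \<and> supp g \<subseteq> K \<longrightarrow>
           \<bar>\<eta> f - \<eta> g\<bar> \<le> N * unorm (\<lambda>x. f x - g x))) \<and>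
     (\<forall>f\<in>Cc. \<forall>\<phi> \<psi> :: real \<Rightarrow> real. \<forall>a b :: real.
        continuous_on UNIV \<phi> \<and> \<phi> 0 = 0 \<and> continuous_on UNIV \<psi> \<and> \<psi> 0 = 0 \<longrightarrow>
        \<eta> (\<lambda>x. a * \<phi> (f x) + b * \<psi> (f x)) = a * \<eta> (\<phi> \<circ> f) + b * \<eta> (\<psi> \<circ> f))"

text \<open>The one-point compactification \<open>W \<union> {\<infinity>}\<close> of a subset W of X, realised on
  \<open>'a option\<close>: \<open>Some x\<close> for \<open>x \<in> W\<close>, and \<open>None\<close> is the point at infinity.\<close>

definition ocomp :: "'a::topological_space set \<Rightarrow> 'a option topology" where
  "ocomp W = topology (\<lambda>U. (\<exists>V. open V \<and> V \<subseteq> W \<and> U = Some ` V) \<or>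
                            (\<exists>K. compact K \<and> K \<subseteq> W \<and> U = insert None (Some ` (W - K))))"

definition lift :: "('a \<Rightarrow> real) \<Rightarrow> 'a option \<Rightarrow> real" where
  "lift g = (\<lambda>p. case p of None \<Rightarrow> 0 | Some x \<Rightarrow> g x)"

definition hat_norm :: "'a set \<Rightarrow> ('a option \<Rightarrow> real) \<Rightarrow> real" where
  "hat_norm W f = (SUP p\<in>insert None (Some ` W). \<bar>f p\<bar>)"

definition CcO :: "'a::topological_space set \<Rightarrow> ('a \<Rightarrow> real) set" where
  "CcO W = {g\<in>Cc. closure (supp g) \<subseteq> W}"

text \<open>The unique Lipschitz (= uniformly continuous) extension of \<open>\<zeta>|C_c(W)\<close> to \<open>C_0(\<widehat>W)\<close>,
  evaluated at f: the limit of \<open>\<zeta> g\<close> as \<open>g \<in> C_c(W)\<close> tends uniformly to f.\<close>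

definition zhat0 :: "(('a::topological_space \<Rightarrow> real) \<Rightarrow> real) \<Rightarrow> 'a set \<Rightarrow> ('a option \<Rightarrow> real) \<Rightarrow> real" where
  "zhat0 \<zeta> W f = (THE v. \<forall>e>0. \<exists>d>0. \<forall>g\<in>CcO W.
        hat_norm W (\<lambda>p. lift g p - f p) < d \<longrightarrow> \<bar>\<zeta> g - v\<bar> < e)"

definition lambdaO :: "(('a::topological_space \<Rightarrow> real) \<Rightarrow> real) \<Rightarrow> 'a set \<Rightarrow> real" where
  "lambdaO \<zeta> W = Sup {\<zeta> g | g. g \<in> CcO W \<and> (\<forall>x. g x \<le> indicator W x)}"

definition zhat :: "(('a::topological_space \<Rightarrow> real) \<Rightarrow> real) \<Rightarrow> 'a set \<Rightarrow> ('a option \<Rightarrow> real) \<Rightarrow> real" where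
  "zhat \<zeta> W f = zhat0 \<zeta> W (\<lambda>p. f p - f None) + lambdaO \<zeta> W * f None"

end

theory Submission
  imports Defs
begin

text \<open>
  Write \<open>C\<^sub>c(W)\<close> for \<open>CcO W\<close>, \<open>\<lambda>\<close> for \<open>lambdaO \<zeta> W\<close>, and \<open>\<parallel>_\<parallel>\<close> for \<open>hat_norm W\<close>.
  The proof has five layers.
  (1) The open sets of \<open>ocomp W\<close> are characterised intrinsically; hence a continuous \<open>F\<close> on
      the compactification is continuous on \<open>W\<close>, is within any \<open>e > 0\<close> of \<open>F \<infinity>\<close> off a
      compact subset of \<open>W\<close>, and is bounded.
  (2) If \<open>F \<infinity> = 0\<close>, the soft truncation \<open>approx W F h\<close> of \<open>F\<close> at level \<open>h\<close> lies in \<open>C\<^sub>c(W)\<close>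
      and is \<open>h\<close>-close to \<open>F\<close>; the same device produces cut-off functions, so no Urysohn
      lemma (and no local compactness of \<open>X\<close>) is needed.
  (3) Since \<open>closure W\<close> is compact, \<open>\<zeta>\<close> is Lipschitz on \<open>C\<^sub>c(W)\<close> with a constant \<open>Lip\<close>; the
      integrals of the approximants converge, so \<open>zhat0 \<zeta> W F\<close> is well defined and
      \<open>\<bar>\<zeta> g - zhat0 \<zeta> W F\<bar> \<le> Lip * \<parallel>g - F\<parallel>\<close> for all \<open>g \<in> C\<^sub>c(W)\<close>.
  (4) The key inequality \<open>g \<le> s + d \<Longrightarrow> \<zeta> g \<le> \<zeta> s + d * \<lambda>\<close> on \<open>C\<^sub>c(W)\<close>, a consequence of
      quasi-linearity, passes to the limit; it yields monotonicity of \<open>zhat \<zeta> W\<close>, and together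
      with \<open>zhat \<zeta> W (f + t) = zhat \<zeta> W f + \<lambda> * t\<close> the Lipschitz bound with constant \<open>\<lambda>\<close>.
  (5) Quasi-linearity of \<open>\<zeta>\<close> passes to the limit by uniform continuity of the outer functions
      on bounded intervals; subtracting the value at infinity reduces arbitrary \<open>\<phi>, \<psi>\<close> to
      functions vanishing at \<open>0\<close>.
\<close>

abbreviation ocomp_points :: "'a set \<Rightarrow> 'a option set" where
  "ocomp_points W \<equiv> insert None (Some ` W)"

definition ocomp_open :: "'a::topological_space set \<Rightarrow> 'a option set \<Rightarrow> bool" where
  "ocomp_open W U \<longleftrightarrow> U \<subseteq> ocomp_points W \<and> open (Some -` U) \<and>
     (None \<in> U \<longrightarrow> compact (W - Some -` U))"

lemma ocomp_open_iff_generator: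
  assumes "open (W::'a::t2_space set)"
  shows "((\<exists>V. open V \<and> V \<subseteq> W \<and> U = Some ` V) \<or>
          (\<exists>K. compact K \<and> K \<subseteq> W \<and> U = insert None (Some ` (W - K)))) \<longleftrightarrow> ocomp_open W U"
proof
  assume "(\<exists>V. open V \<and> V \<subseteq> W \<and> U = Some ` V) \<or>
          (\<exists>K. compact K \<and> K \<subseteq> W \<and> U = insert None (Some ` (W - K)))"
  then show "ocomp_open W U"
  proof
    assume "\<exists>V. open V \<and> V \<subseteq> W \<and> U = Some ` V"
    then obtain V where "open V" "V \<subseteq> W" "U = Some ` V" by blast
    moreover have "Some -` Some ` V = V" by auto
    ultimately show ?thesis unfolding ocomp_open_def by auto
  next
    assume "\<exists>K. compact K \<and> K \<subseteq> W \<and> U = insert None (Some ` (W - K))"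
    then obtain K where K: "compact K" "K \<subseteq> W" "U = insert None (Some ` (W - K))" by blast
    then have "Some -` U = W - K" "W - (W - K) = K" by auto
    moreover have "open (W - K)" using assms K by (simp add: compact_imp_closed open_Diff)
    ultimately show ?thesis using K unfolding ocomp_open_def by auto
  qed
next
  assume U: "ocomp_open W U"
  define V where "V = Some -` U"
  have "V \<subseteq> W" "open V" using U unfolding ocomp_open_def V_def by auto
  show "(\<exists>V. open V \<and> V \<subseteq> W \<and> U = Some ` V) \<or>
          (\<exists>K. compact K \<and> K \<subseteq> W \<and> U = insert None (Some ` (W - K)))"
  proof (cases "None \<in> U")
    case True
    then have "U = insert None (Some ` (W - (W - V)))" "compact (W - V)"
      using U \<open>V \<subseteq> W\<close> unfolding V_def ocomp_open_def by (auto simp: double_diff)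
    then show ?thesis by blast
  next
    case False
    then have "U = Some ` V" unfolding V_def by (auto simp: image_iff) (metis not_None_eq)
    then show ?thesis using \<open>V \<subseteq> W\<close> \<open>open V\<close> by blast
  qed
qed

lemma istopology_ocomp_open: "istopology (ocomp_open (W::'a::t2_space set))"
  unfolding istopology_def
proof safe
  fix S T assume "ocomp_open W S" "ocomp_open W T"
  moreover have "W - Some -` (S \<inter> T) = (W - Some -` S) \<union> (W - Some -` T)" by auto
  ultimately show "ocomp_open W (S \<inter> T)"
    unfolding ocomp_open_def by auto
next
  fix \<U> assume \<U>: "\<forall>S\<in>\<U>. ocomp_open W S"
  have "Some -` \<Union>\<U> = (\<Union>S\<in>\<U>. Some -` S)" by auto
  then have o: "open (Some -` \<Union>\<U>)" using \<U> unfolding ocomp_open_def by auto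
  have "compact (W - Some -` \<Union>\<U>)" if none: "None \<in> \<Union>\<U>"
  proof -
    obtain S where S: "S \<in> \<U>" "None \<in> S" using none by auto
    then have "compact (W - Some -` S)" using \<U> unfolding ocomp_open_def by auto
    moreover have "W - Some -` \<Union>\<U> = (W - Some -` S) \<inter> - (Some -` \<Union>\<U>)" using S by auto
    ultimately show ?thesis using o by (simp add: closed_Compl compact_Int_closed)
  qed
  then show "ocomp_open W (\<Union>\<U>)" using o \<U> unfolding ocomp_open_def by blast
qed

lemma openin_ocomp:
  assumes "open (W::'a::t2_space set)"
  shows "openin (ocomp W) U \<longleftrightarrow> ocomp_open W U"
proof -
  have "ocomp W = topology (ocomp_open W)"
    unfolding ocomp_def using ocomp_open_iff_generator[OF assms] by presburger
  then show ?thesis by (simp add: topology_inverse'[OF istopology_ocomp_open[of W]])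
qed

lemma topspace_ocomp:
  assumes "open (W::'a::t2_space set)"
  shows "topspace (ocomp W) = ocomp_points W"
proof -
  have "Some -` ocomp_points W = W" by auto
  then have "ocomp_open W (ocomp_points W)"
    unfolding ocomp_open_def using assms by simp
  then show ?thesis
    unfolding topspace_def openin_ocomp[OF assms] ocomp_open_def by blast
qed

context
  fixes W :: "'a::t2_space set"
  assumes open_W: "open W"
begin

lemma ocomp_preimage_open:
  assumes F: "continuous_map (ocomp W) euclideanreal F" and U: "open U"
  shows "open {x\<in>W. F (Some x) \<in> U}"
    and "F None \<in> U \<Longrightarrow> compact (W - {x\<in>W. F (Some x) \<in> U})"
proof -
  define S where "S = {p \<in> topspace (ocomp W). F p \<in> U}"
  have "ocomp_open W S"
    using F U openin_ocomp[OF open_W] unfolding continuous_map S_def by auto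
  moreover have "Some -` S = {x\<in>W. F (Some x) \<in> U}"
    unfolding S_def topspace_ocomp[OF open_W] by auto
  moreover have "F None \<in> U \<Longrightarrow> None \<in> S"
    unfolding S_def topspace_ocomp[OF open_W] by auto
  ultimately show "open {x\<in>W. F (Some x) \<in> U}"
    and "F None \<in> U \<Longrightarrow> compact (W - {x\<in>W. F (Some x) \<in> U})"
    unfolding ocomp_open_def by auto
qed

lemma ocomp_continuous_on_W:
  assumes F: "continuous_map (ocomp W) euclideanreal F"
  shows "continuous_on W (\<lambda>x. F (Some x))"
  unfolding continuous_on_open_invariant
proof (intro allI impI)
  fix B :: "real set" assume "open B"
  then have "open {x\<in>W. F (Some x) \<in> B}" by (rule ocomp_preimage_open(1)[OF F])
  moreover have "{x\<in>W. F (Some x) \<in> B} \<inter> W = (\<lambda>x. F (Some x)) -` B \<inter> W" by auto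
  ultimately show "\<exists>A. open A \<and> A \<inter> W = (\<lambda>x. F (Some x)) -` B \<inter> W" by blast
qed

lemma ocomp_continuous_at_infinity:
  assumes F: "continuous_map (ocomp W) euclideanreal F" and e: "e > 0"
  obtains K where "compact K" "K \<subseteq> W" "\<And>x. x \<in> W - K \<Longrightarrow> \<bar>F (Some x) - F None\<bar> < e"
proof
  let ?K = "W - {x\<in>W. F (Some x) \<in> ball (F None) e}"
  show "compact ?K" using ocomp_preimage_open(2)[OF F, of "ball (F None) e"] e by simp
  show "?K \<subseteq> W" by blast
  show "\<bar>F (Some x) - F None\<bar> < e" if "x \<in> W - ?K" for x
    using that by (auto simp: dist_real_def abs_minus_commute)
qed

lemma ocomp_continuous_bounded:
  assumes F: "continuous_map (ocomp W) euclideanreal F"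
  obtains B where "\<And>p. p \<in> ocomp_points W \<Longrightarrow> \<bar>F p\<bar> \<le> B"
proof -
  obtain K where K: "compact K" "K \<subseteq> W" "\<And>x. x \<in> W - K \<Longrightarrow> \<bar>F (Some x) - F None\<bar> < 1"
    using ocomp_continuous_at_infinity[OF F, of 1] by auto
  have "continuous_on K (\<lambda>x. F (Some x))"
    using ocomp_continuous_on_W[OF F] K(2) continuous_on_subset by blast
  then have "compact ((\<lambda>x. F (Some x)) ` K)" using K(1) compact_continuous_image by blast
  then obtain B where B: "\<And>x. x \<in> K \<Longrightarrow> \<bar>F (Some x)\<bar> \<le> B"
    using compact_imp_bounded bounded_iff by (metis image_eqI real_norm_def)
  have "\<bar>F p\<bar> \<le> max B (\<bar>F None\<bar> + 1)" if "p \<in> ocomp_points W" for p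
  proof (cases "p \<in> Some ` K")
    case True then show ?thesis using B by force
  next
    case False then show ?thesis using that K(3) by force
  qed
  then show ?thesis using that by blast
qed

end

lemma Cc_bounded:
  assumes "g \<in> Cc"
  obtains B where "\<And>x. \<bar>g x\<bar> \<le> B"
proof -
  have "continuous_on UNIV g" and K: "compact (closure (supp g))"
    using assms unfolding Cc_def by auto
  then have "compact (g ` closure (supp g))"
    using compact_continuous_image continuous_on_subset by blast
  then obtain B where B: "\<And>x. x \<in> closure (supp g) \<Longrightarrow> \<bar>g x\<bar> \<le> B"
    using compact_imp_bounded bounded_iff by (metis image_eqI real_norm_def)
  have "\<bar>g x\<bar> \<le> max B 0" for x
    using B[of x] closure_subset[of "supp g"] by (cases "x \<in> supp g") (auto simp: supp_def)
  then show ?thesis using that by blast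
qed

lemma Cc_zero: "(\<lambda>x. 0::real) \<in> Cc"
  unfolding Cc_def supp_def by auto

lemma unorm_le:
  assumes "\<And>x. \<bar>f x\<bar> \<le> e"
  shows "unorm f \<le> e"
  unfolding unorm_def by (rule cSUP_least) (use assms in auto)

lemma hat_norm_upper:
  assumes "\<And>q. q \<in> ocomp_points W \<Longrightarrow> \<bar>G q\<bar> \<le> B" and "p \<in> ocomp_points W"
  shows "\<bar>G p\<bar> \<le> hat_norm W G"
proof -
  have "bdd_above ((\<lambda>p. \<bar>G p\<bar>) ` ocomp_points W)"
    using assms(1) by (intro bdd_aboveI2[of _ _ B]) blast
  then show ?thesis unfolding hat_norm_def using assms(2) by (rule cSUP_upper[rotated])
qed

lemma hat_norm_le:
  assumes "\<And>p. p \<in> ocomp_points W \<Longrightarrow> \<bar>G p\<bar> \<le> e"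
  shows "hat_norm W G \<le> e"
  unfolding hat_norm_def by (rule cSUP_least) (use assms in auto)

lemma hat_norm_commute: "hat_norm W (\<lambda>p. h p - f p) = hat_norm W (\<lambda>p. f p - h p)"
  unfolding hat_norm_def by (simp add: abs_minus_commute)

definition unlift :: "'a set \<Rightarrow> ('a option \<Rightarrow> real) \<Rightarrow> 'a \<Rightarrow> real" where
  "unlift W F x = (if x \<in> W then F (Some x) else 0)"

lemma lift_comp:
  assumes "k 0 = 0"
  shows "lift (\<lambda>x. k (g x)) p = k (lift g p)"
  using assms by (cases p) (auto simp: lift_def)

context
  fixes W :: "'a::t2_space set"
  assumes open_W: "open W"
begin

text \<open>A function continuous on \<open>W\<close> and vanishing off a compact \<open>K \<subseteq> W\<close> lies in \<open>C\<^sub>c(W)\<close>: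
  it is continuous on the open cover \<open>W, -K\<close> of \<open>X\<close>.\<close>

lemma CcO_intro:
  assumes K: "compact K" "K \<subseteq> W" and c: "continuous_on W u" and z: "\<And>x. x \<notin> K \<Longrightarrow> u x = 0"
  shows "u \<in> CcO W"
proof -
  have cK: "closed K" using K compact_imp_closed by blast
  have "continuous_on (-K) u"
    using continuous_on_cong[of "-K" "-K" u "\<lambda>_. 0"] z by simp
  then have "continuous_on (W \<union> -K) u"
    using continuous_on_open_Un[of W "-K" u] open_W cK c by auto
  moreover have "W \<union> -K = UNIV" using K by auto
  ultimately have cu: "continuous_on UNIV u" by simp
  have "supp u \<subseteq> K" using z unfolding supp_def by auto
  then have cl: "closure (supp u) \<subseteq> K" using cK closure_minimal by blast
  then have "compact (closure (supp u))"
    using compact_Int_closed[OF K(1), of "closure (supp u)"] by (simp add: Int_absorb1)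
  then show ?thesis using cl K cu unfolding CcO_def Cc_def by auto
qed

lemma CcO_elim:
  assumes "g \<in> CcO W"
  obtains K where "compact K" "K \<subseteq> W" "continuous_on UNIV g" "\<And>x. x \<notin> K \<Longrightarrow> g x = 0"
proof
  show "compact (closure (supp g))" "closure (supp g) \<subseteq> W" "continuous_on UNIV g"
    using assms unfolding CcO_def Cc_def by auto
  show "g x = 0" if "x \<notin> closure (supp g)" for x
    using that closure_subset[of "supp g"] unfolding supp_def by auto
qed

lemma CcO_Cc: "g \<in> CcO W \<Longrightarrow> g \<in> Cc"
  unfolding CcO_def by simp

lemma CcO_vanishes: "g \<in> CcO W \<Longrightarrow> x \<notin> W \<Longrightarrow> g x = 0"
  by (elim CcO_elim) blast

lemma CcO_supp: "g \<in> CcO W \<Longrightarrow> supp g \<subseteq> closure W"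
  unfolding CcO_def using closure_subset closure_mono by blast

lemma CcO_zero: "(\<lambda>x. 0::real) \<in> CcO W"
  unfolding CcO_def using Cc_zero by (auto simp: supp_def)

lemma CcO_comp:
  assumes g: "g \<in> CcO W" and k: "continuous_on UNIV k" "k 0 = 0"
  shows "(\<lambda>x. k (g x)) \<in> CcO W"
proof -
  obtain K where K: "compact K" "K \<subseteq> W" "continuous_on UNIV g" "\<And>x. x \<notin> K \<Longrightarrow> g x = 0"
    using CcO_elim[OF g] by blast
  have "continuous_on W (\<lambda>x. k (g x))"
    using K(3) k(1) continuous_on_compose2[of UNIV k UNIV g] continuous_on_subset by blast
  then show ?thesis using K k(2) by (intro CcO_intro[of K]) auto
qed

lemma CcO_lincomb:
  assumes g: "g \<in> CcO W" and h: "h \<in> CcO W"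
  shows "(\<lambda>x. a * g x + b * h x) \<in> CcO W"
proof -
  obtain K where K: "compact K" "K \<subseteq> W" "continuous_on UNIV g" "\<And>x. x \<notin> K \<Longrightarrow> g x = 0"
    using CcO_elim[OF g] by blast
  obtain L where L: "compact L" "L \<subseteq> W" "continuous_on UNIV h" "\<And>x. x \<notin> L \<Longrightarrow> h x = 0"
    using CcO_elim[OF h] by blast
  have "continuous_on W g" "continuous_on W h"
    using K(3) L(3) continuous_on_subset by blast+
  then have "continuous_on W (\<lambda>x. a * g x + b * h x)" by (intro continuous_intros)
  then show ?thesis using K L by (intro CcO_intro[of "K \<union> L"]) auto
qed

lemma unlift_comp_CcO:
  assumes F: "continuous_map (ocomp W) euclideanreal F" "F None = 0" and e: "e > 0"
    and k: "continuous_on UNIV k" and k0: "\<And>t. \<bar>t\<bar> \<le> e \<Longrightarrow> k t = 0"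
  shows "(\<lambda>x. k (unlift W F x)) \<in> CcO W"
proof -
  obtain K where K: "compact K" "K \<subseteq> W" "\<And>x. x \<in> W - K \<Longrightarrow> \<bar>F (Some x) - F None\<bar> < e"
    using ocomp_continuous_at_infinity[OF open_W F(1) e] by blast
  have "continuous_on W (\<lambda>x. k (F (Some x)))"
    using ocomp_continuous_on_W[OF open_W F(1)] k continuous_on_compose2 by blast
  moreover have "continuous_on W (\<lambda>x. k (unlift W F x)) = continuous_on W (\<lambda>x. k (F (Some x)))"
    by (rule continuous_on_cong) (auto simp: unlift_def)
  moreover have "k (unlift W F x) = 0" if "x \<notin> K" for x
    using that K(3)[of x] k0[of "unlift W F x"] F(2) e by (cases "x \<in> W") (auto simp: unlift_def)
  ultimately show ?thesis using K by (intro CcO_intro[of K]) auto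
qed

end

definition trunc :: "real \<Rightarrow> real \<Rightarrow> real" where
  "trunc h t = max (t - h) 0 + min (t + h) 0"

lemma trunc_continuous: "continuous_on UNIV (trunc h)"
  unfolding trunc_def by (intro continuous_intros)

lemma trunc_close: "h \<ge> 0 \<Longrightarrow> \<bar>trunc h t - t\<bar> \<le> h"
  unfolding trunc_def by (auto simp: max_def min_def)

lemma trunc_vanishes: "\<bar>t\<bar> \<le> h \<Longrightarrow> trunc h t = 0"
  unfolding trunc_def by (auto simp: max_def min_def)

lemma trunc_mono: "h \<ge> 0 \<Longrightarrow> d \<ge> 0 \<Longrightarrow> t \<le> u + d \<Longrightarrow> trunc h t \<le> trunc h u + d"
  unfolding trunc_def by (auto simp: max_def min_def)

definition approx :: "'a set \<Rightarrow> ('a option \<Rightarrow> real) \<Rightarrow> real \<Rightarrow> 'a \<Rightarrow> real" where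
  "approx W F h x = trunc h (unlift W F x)"

lemma approx_CcO:
  assumes "open (W::'a::t2_space set)"
    and "continuous_map (ocomp W) euclideanreal F" "F None = 0" and "h > 0"
  shows "approx W F h \<in> CcO W"
  unfolding approx_def[abs_def]
  by (rule unlift_comp_CcO[OF assms trunc_continuous trunc_vanishes])

lemma approx_close:
  assumes "h \<ge> 0" "F None = 0" "p \<in> ocomp_points W"
  shows "\<bar>lift (approx W F h) p - F p\<bar> \<le> h"
  using assms trunc_close[of h] by (auto simp: lift_def approx_def unlift_def)

lemma approx_hat_norm:
  assumes "h \<ge> 0" "F None = 0"
  shows "hat_norm W (\<lambda>p. lift (approx W F h) p - F p) \<le> h"
  by (intro hat_norm_le approx_close assms)

lemma approx_nonzero: "approx W F h x \<noteq> 0 \<Longrightarrow> h < \<bar>unlift W F x\<bar>"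
  by (metis approx_def not_less trunc_vanishes)

lemma approx_mono:
  assumes "h \<ge> 0" "d \<ge> 0" "\<And>p. p \<in> ocomp_points W \<Longrightarrow> F p \<le> H p + d"
  shows "approx W F h x \<le> approx W H h x + d"
  using assms trunc_mono[of h d] trunc_vanishes[of 0 h]
  by (cases "x \<in> W") (auto simp: approx_def unlift_def)

text \<open>It replaces Urysohn's lemma in the monotonicity argument.\<close>

lemma cutoff_exists:
  assumes "open (W::'a::t2_space set)"
    and F: "continuous_map (ocomp W) euclideanreal F" "F None = 0" and h: "h > 0"
  obtains e where "e \<in> CcO W" "\<And>x. 0 \<le> e x" "\<And>x. e x \<le> 1"
    "\<And>x. h < \<bar>unlift W F x\<bar> \<Longrightarrow> e x = 1"
proof
  define k where "k t = min 1 (max 0 (2 * \<bar>t\<bar> / h - 1))" for t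
  have "continuous_on UNIV k" unfolding k_def using h by (intro continuous_intros) auto
  moreover have "k t = 0" if "\<bar>t\<bar> \<le> h / 2" for t
  proof -
    have "2 * \<bar>t\<bar> / h \<le> 1" using that h by (simp add: divide_le_eq)
    then show ?thesis by (simp add: k_def)
  qed
  ultimately show "(\<lambda>x. k (unlift W F x)) \<in> CcO W"
    using h by (intro unlift_comp_CcO[OF assms(1) F, of "h / 2"]) auto
  show "0 \<le> k (unlift W F x)" "k (unlift W F x) \<le> 1" for x unfolding k_def by auto
  show "k (unlift W F x) = 1" if "h < \<bar>unlift W F x\<bar>" for x
  proof -
    have "2 \<le> 2 * \<bar>unlift W F x\<bar> / h" using that h by (simp add: le_divide_eq)
    then show ?thesis by (simp add: k_def)
  qed
qed

locale quasi_integral_on =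
  fixes \<zeta> :: "('a::t2_space \<Rightarrow> real) \<Rightarrow> real" and W :: "'a set"
  assumes open_W: "open W" and compact_closure_W: "compact (closure W)"
    and quasi_integral: "quasi_integral \<zeta>"
begin

text \<open>The constant \<open>\<lambda>\<close> = sup of \<open>\<zeta> g\<close> over \<open>g \<in> C\<^sub>c(W)\<close> with \<open>g \<le> 1\<^sub>W\<close>; it is the weight given to
  the value at infinity and, as it turns out, a Lipschitz constant of \<open>zhat \<zeta> W\<close>.\<close>

abbreviation lam :: real where "lam \<equiv> lambdaO \<zeta> W"

lemma zeta_mono_all: "\<forall>f\<in>Cc. \<forall>g\<in>Cc. (\<forall>x. f x \<le> g x) \<longrightarrow> \<zeta> f \<le> \<zeta> g"
  using quasi_integral unfolding quasi_integral_def by (elim conjE)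

lemma zeta_lipschitz_local: "\<forall>K. compact K \<longrightarrow> (\<exists>N\<ge>0. \<forall>f\<in>Cc. \<forall>g\<in>Cc.
    supp f \<subseteq> K \<and> supp g \<subseteq> K \<longrightarrow> \<bar>\<zeta> f - \<zeta> g\<bar> \<le> N * unorm (\<lambda>x. f x - g x))"
  using quasi_integral unfolding quasi_integral_def by (elim conjE)

lemma zeta_linear_all: "\<forall>f\<in>Cc. \<forall>\<phi> \<psi> :: real \<Rightarrow> real. \<forall>a b :: real.
    continuous_on UNIV \<phi> \<and> \<phi> 0 = 0 \<and> continuous_on UNIV \<psi> \<and> \<psi> 0 = 0 \<longrightarrow>
    \<zeta> (\<lambda>x. a * \<phi> (f x) + b * \<psi> (f x)) = a * \<zeta> (\<phi> \<circ> f) + b * \<zeta> (\<psi> \<circ> f)"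
  using quasi_integral unfolding quasi_integral_def by (elim conjE)

lemma zeta_mono: "f \<in> Cc \<Longrightarrow> g \<in> Cc \<Longrightarrow> (\<And>x. f x \<le> g x) \<Longrightarrow> \<zeta> f \<le> \<zeta> g"
  using zeta_mono_all by simp

lemma zeta_linear:
  assumes "g \<in> Cc" "continuous_on UNIV \<phi>" "\<phi> 0 = 0" "continuous_on UNIV \<psi>" "\<psi> 0 = 0"
  shows "\<zeta> (\<lambda>x. a * \<phi> (g x) + b * \<psi> (g x)) = a * \<zeta> (\<lambda>x. \<phi> (g x)) + b * \<zeta> (\<lambda>x. \<psi> (g x))"
  using zeta_linear_all[rule_format, of g \<phi> \<psi> a b] assms by (simp add: o_def)

lemma zeta_add:
  assumes "g \<in> Cc" "continuous_on UNIV \<phi>" "\<phi> 0 = 0" "continuous_on UNIV \<psi>" "\<psi> 0 = 0"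
  shows "\<zeta> (\<lambda>x. \<phi> (g x) + \<psi> (g x)) = \<zeta> (\<lambda>x. \<phi> (g x)) + \<zeta> (\<lambda>x. \<psi> (g x))"
  using zeta_linear[OF assms, of 1 1] by simp

lemma zeta_scale:
  assumes "g \<in> Cc"
  shows "\<zeta> (\<lambda>x. a * g x) = a * \<zeta> g"
  using zeta_linear[OF assms, of "\<lambda>t. t" "\<lambda>t. t" a 0] by simp

lemma zeta_zero: "\<zeta> (\<lambda>x. 0) = 0"
  using zeta_scale[OF Cc_zero, of 0] by simp

text \<open>Since \<open>closure W\<close> is compact, \<open>\<zeta>\<close> is uniformly Lipschitz on \<open>C\<^sub>c(W)\<close>; we fix a constant.\<close>

definition Lip :: real where
  "Lip = (SOME N. N \<ge> 0 \<and> (\<forall>f\<in>Cc. \<forall>g\<in>Cc. supp f \<subseteq> closure W \<and> supp g \<subseteq> closure W \<longrightarrow>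
           \<bar>\<zeta> f - \<zeta> g\<bar> \<le> N * unorm (\<lambda>x. f x - g x)))"

lemma Lip_spec: "Lip \<ge> 0 \<and> (\<forall>f\<in>Cc. \<forall>g\<in>Cc. supp f \<subseteq> closure W \<and> supp g \<subseteq> closure W \<longrightarrow>
           \<bar>\<zeta> f - \<zeta> g\<bar> \<le> Lip * unorm (\<lambda>x. f x - g x))"
  unfolding Lip_def by (rule someI_ex) (use zeta_lipschitz_local compact_closure_W in blast)

lemma Lip_nonneg: "Lip \<ge> 0"
  using Lip_spec by blast

lemma zeta_lipschitz:
  assumes "f \<in> CcO W" "g \<in> CcO W" "\<And>x. \<bar>f x - g x\<bar> \<le> e"
  shows "\<bar>\<zeta> f - \<zeta> g\<bar> \<le> Lip * e"
proof -
  have "\<bar>\<zeta> f - \<zeta> g\<bar> \<le> Lip * unorm (\<lambda>x. f x - g x)"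
    using Lip_spec assms(1,2) CcO_Cc[OF open_W] CcO_supp[OF open_W] by blast
  also have "\<dots> \<le> Lip * e"
    using unorm_le[of "\<lambda>x. f x - g x" e] assms(3) Lip_nonneg by (simp add: mult_left_mono)
  finally show ?thesis .
qed

text \<open>The set defining \<open>\<lambda>\<close> is bounded by \<open>Lip\<close>, so \<open>\<lambda>\<close> is a genuine supremum.\<close>

lemma lam_bdd: "bdd_above {\<zeta> g | g. g \<in> CcO W \<and> (\<forall>x. g x \<le> indicator W x)}"
proof (rule bdd_aboveI[where M = Lip], clarify)
  fix g assume g: "g \<in> CcO W" "\<forall>x. g x \<le> indicator W x"
  define g' where "g' x = max (g x) 0" for x
  have g'C: "g' \<in> CcO W" unfolding g'_def
    by (rule CcO_comp[OF open_W g(1)]) (auto intro!: continuous_intros)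
  have "\<zeta> g \<le> \<zeta> g'"
    using g g'C CcO_Cc[OF open_W] by (intro zeta_mono) (auto simp: g'_def)
  also have "\<zeta> g' \<le> Lip"
  proof -
    have "\<bar>g' x - 0\<bar> \<le> 1" for x
    proof -
      have "g x \<le> 1" using g(2) order_trans[of "g x" "indicator W x"] by (simp add: indicator_def)
      then show ?thesis by (simp add: g'_def)
    qed
    then show ?thesis
      using zeta_lipschitz[OF g'C CcO_zero[OF open_W], of 1] zeta_zero by simp
  qed
  finally show "\<zeta> g \<le> Lip" .
qed

lemma lam_upper: "e \<in> CcO W \<Longrightarrow> (\<And>x. e x \<le> indicator W x) \<Longrightarrow> \<zeta> e \<le> lam"
  unfolding lambdaO_def by (rule cSup_upper[OF _ lam_bdd]) blast

lemma lam_nonneg: "lam \<ge> 0"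
  using lam_upper[OF CcO_zero[OF open_W]] zeta_zero by (simp add: indicator_def)

text \<open>Splitting a function at a level \<open>c \<ge> 0\<close>: \<open>g = min g c + (g - c)\<^sup>+\<close> is a sum of two
  functions of \<open>g\<close>, so quasi-linearity splits \<open>\<zeta> g\<close> accordingly.\<close>

lemma zeta_split_at_level:
  assumes "g \<in> Cc" "c \<ge> 0"
  shows "\<zeta> g = \<zeta> (\<lambda>x. min (g x) c) + \<zeta> (\<lambda>x. max (g x - c) 0)"
proof -
  have "(\<lambda>x. min (g x) c + max (g x - c) 0) = g" by (auto simp: min_def max_def)
  moreover have "\<zeta> (\<lambda>x. min (g x) c + max (g x - c) 0) = \<zeta> (\<lambda>x. min (g x) c) + \<zeta> (\<lambda>x. max (g x - c) 0)"
    using assms by (intro zeta_add) (auto intro!: continuous_intros)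
  ultimately show ?thesis by simp
qed

text \<open>Adding a multiple of a cut-off \<open>e\<close> to a nonpositive \<open>r\<close> supported where \<open>e = 1\<close> is
  additive under \<open>\<zeta>\<close>: both summands are functions of the single function \<open>r - d * e\<close>.\<close>

lemma zeta_add_cutoff:
  assumes r: "r \<in> CcO W" "\<And>x. r x \<le> 0" and e: "e \<in> CcO W" "\<And>x. 0 \<le> e x" "\<And>x. e x \<le> 1"
    and on_supp: "\<And>x. r x \<noteq> 0 \<Longrightarrow> e x = 1" and d: "d \<ge> 0"
  shows "\<zeta> (\<lambda>x. r x + d * e x) = \<zeta> r + d * \<zeta> e"
proof -
  define w where "w x = 1 * r x + (- d) * e x" for x
  have wC: "w \<in> CcO W" unfolding w_def[abs_def] by (rule CcO_lincomb[OF open_W r(1) e(1)])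
  have parts: "min (w x + d) 0 = r x" "min (- w x) d = d * e x" for x
  proof -
    have "e x = 1 \<or> r x = 0" using on_supp by blast
    then show "min (w x + d) 0 = r x" "min (- w x) d = d * e x"
      unfolding w_def using r(2)[of x] e(2,3)[of x] d
      by (auto simp: min_def mult_le_cancel_left1 mult_left_le)
  qed
  have "\<zeta> (\<lambda>x. min (w x + d) 0 + min (- w x) d) = \<zeta> (\<lambda>x. min (w x + d) 0) + \<zeta> (\<lambda>x. min (- w x) d)"
    using wC d CcO_Cc[OF open_W] by (intro zeta_add) (auto intro!: continuous_intros)
  then show ?thesis
    unfolding parts using zeta_scale[OF CcO_Cc[OF open_W e(1)], of d] by (simp add: fun_eq_iff)
qed

text \<open>Indeed
  \<open>\<zeta> g = \<zeta>(min g d) + \<zeta>((g - d)\<^sup>+) \<le> \<zeta>(min s 0 + d e) + \<zeta>(s\<^sup>+) = \<zeta> s + d \<zeta> e\<close>.\<close>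

lemma zeta_shift_bound:
  assumes g: "g \<in> CcO W" and s: "s \<in> CcO W" and e: "e \<in> CcO W" "\<And>x. 0 \<le> e x" "\<And>x. e x \<le> 1"
    and on_supp: "\<And>x. g x \<noteq> 0 \<or> s x \<noteq> 0 \<Longrightarrow> e x = 1"
    and d: "d \<ge> 0" and le: "\<And>x. g x \<le> s x + d"
  shows "\<zeta> g \<le> \<zeta> s + d * lam"
proof -
  note Cc = CcO_Cc[OF open_W]
  define r where "r x = min (s x) 0" for x
  have rC: "r \<in> CcO W" unfolding r_def[abs_def]
    by (rule CcO_comp[OF open_W s]) (auto intro!: continuous_intros)
  have r_nonpos: "r x \<le> 0" for x
    unfolding r_def by simp
  have r_supp: "e x = 1" if "r x \<noteq> 0" for x
    using that on_supp[of x] unfolding r_def by (metis min.idem)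
  have CcO_trunc: "(\<lambda>x. max (g x - d) 0) \<in> CcO W" "(\<lambda>x. max (s x) 0) \<in> CcO W"
    "(\<lambda>x. min (g x) d) \<in> CcO W" "(\<lambda>x. r x + d * e x) \<in> CcO W"
    using d CcO_lincomb[OF open_W rC e(1), of 1 d]
    by (auto intro!: CcO_comp[OF open_W g] CcO_comp[OF open_W s] continuous_intros)
  have "\<zeta> g = \<zeta> (\<lambda>x. min (g x) d) + \<zeta> (\<lambda>x. max (g x - d) 0)"
    by (rule zeta_split_at_level[OF Cc[OF g] d])
  also have "\<dots> \<le> \<zeta> (\<lambda>x. r x + d * e x) + \<zeta> (\<lambda>x. max (s x) 0)"
  proof (intro add_mono zeta_mono)
    show "min (g x) d \<le> r x + d * e x" for x
    proof (cases "e x = 1")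
      case True then show ?thesis using le[of x] unfolding r_def by (auto simp: min_def)
    next
      case False then have "g x = 0" "s x = 0" using on_supp[of x] by auto
      then show ?thesis using e(2)[of x] d unfolding r_def by simp
    qed
    show "max (g x - d) 0 \<le> max (s x) 0" for x using le[of x] by linarith
  qed (use CcO_trunc Cc in auto)
  also have "\<dots> = \<zeta> s + d * \<zeta> e"
    using zeta_add_cutoff[OF rC r_nonpos e r_supp d] zeta_split_at_level[OF Cc[OF s] order_refl]
    unfolding r_def by simp
  also have "\<dots> \<le> \<zeta> s + d * lam"
    using lam_upper[OF e(1)] CcO_vanishes[OF open_W e(1)] e(3) d
    by (auto simp: indicator_def intro!: mult_left_mono)
  finally show ?thesis .
qed

end

lemma Cauchy_by_null_sequence:
  fixes x \<delta> :: "nat \<Rightarrow> real"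
  assumes \<delta>: "\<delta> \<longlonglongrightarrow> 0" and bound: "\<And>m n. \<bar>x m - x n\<bar> \<le> \<delta> m + \<delta> n"
  shows "Cauchy x"
proof (rule metric_CauchyI)
  fix e :: real assume "e > 0"
  then obtain M where M: "\<And>n. n \<ge> M \<Longrightarrow> \<bar>\<delta> n\<bar> < e / 2"
    using \<delta> unfolding LIMSEQ_iff by (metis half_gt_zero real_norm_def diff_zero)
  have "dist (x m) (x n) < e" if "m \<ge> M" "n \<ge> M" for m n
    using bound[of m n] M[OF that(1)] M[OF that(2)] by (simp add: dist_real_def)
  then show "\<exists>M. \<forall>m\<ge>M. \<forall>n\<ge>M. dist (x m) (x n) < e" by blast
qed

context quasi_integral_on
begin

lemma lift_diff_bounded:
  assumes F: "continuous_map (ocomp W) euclideanreal F" and g: "g \<in> CcO W"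
  obtains B where "\<And>p. p \<in> ocomp_points W \<Longrightarrow> \<bar>lift g p - F p\<bar> \<le> B"
proof -
  obtain B1 where B1: "\<And>p. p \<in> ocomp_points W \<Longrightarrow> \<bar>F p\<bar> \<le> B1"
    using ocomp_continuous_bounded[OF open_W F] by blast
  obtain B2 where B2: "\<And>x. \<bar>g x\<bar> \<le> B2" using Cc_bounded CcO_Cc[OF open_W g] by blast
  have lift_bound: "\<bar>lift g p\<bar> \<le> max B2 0" for p
    using B2 by (cases p) (auto simp: lift_def le_max_iff_disj)
  have "\<bar>lift g p - F p\<bar> \<le> max B2 0 + B1" if "p \<in> ocomp_points W" for p
    using B1[OF that] lift_bound[of p] by linarith
  then show ?thesis using that by blast
qed

lemma lift_diff_le_hat_norm:
  assumes "continuous_map (ocomp W) euclideanreal F" "g \<in> CcO W" "p \<in> ocomp_points W"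
  shows "\<bar>lift g p - F p\<bar> \<le> hat_norm W (\<lambda>p. lift g p - F p)"
proof -
  obtain B where "\<And>p. p \<in> ocomp_points W \<Longrightarrow> \<bar>lift g p - F p\<bar> \<le> B"
    using lift_diff_bounded[OF assms(1,2)] by blast
  then show ?thesis using assms(3) by (rule hat_norm_upper)
qed

lemma zeta_dist_via:
  assumes F: "continuous_map (ocomp W) euclideanreal F" and g: "g \<in> CcO W" and h: "h \<in> CcO W"
  shows "\<bar>\<zeta> g - \<zeta> h\<bar> \<le> Lip * (hat_norm W (\<lambda>p. lift g p - F p) + hat_norm W (\<lambda>p. lift h p - F p))"
proof (rule zeta_lipschitz[OF g h])
  fix x
  have "\<bar>lift g p - F p\<bar> \<le> hat_norm W (\<lambda>p. lift g p - F p)"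
    "\<bar>lift h p - F p\<bar> \<le> hat_norm W (\<lambda>p. lift h p - F p)" if "p \<in> ocomp_points W" for p
    using lift_diff_le_hat_norm[OF F g that] lift_diff_le_hat_norm[OF F h that] by auto
  from this[of None] this[of "Some x"] CcO_vanishes[OF open_W g, of x] CcO_vanishes[OF open_W h, of x]
  show "\<bar>g x - h x\<bar> \<le> hat_norm W (\<lambda>p. lift g p - F p) + hat_norm W (\<lambda>p. lift h p - F p)"
    by (cases "x \<in> W") (auto simp: lift_def)
qed

definition limit_value :: "('a option \<Rightarrow> real) \<Rightarrow> real \<Rightarrow> bool" where
  "limit_value F v \<longleftrightarrow> (\<forall>e>0. \<exists>d>0. \<forall>g\<in>CcO W.
        hat_norm W (\<lambda>p. lift g p - F p) < d \<longrightarrow> \<bar>\<zeta> g - v\<bar> < e)"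

lemma limit_value_unique:
  assumes F: "continuous_map (ocomp W) euclideanreal F" "F None = 0"
    and v: "limit_value F v" and w: "limit_value F w"
  shows "v = w"
proof -
  have "\<bar>v - w\<bar> \<le> 0 + e" if e: "e > 0" for e
  proof -
    obtain d1 where d1: "d1 > 0" "\<And>g. g \<in> CcO W \<Longrightarrow> hat_norm W (\<lambda>p. lift g p - F p) < d1 \<Longrightarrow> \<bar>\<zeta> g - v\<bar> < e / 2"
      using v e unfolding limit_value_def by (meson half_gt_zero)
    obtain d2 where d2: "d2 > 0" "\<And>g. g \<in> CcO W \<Longrightarrow> hat_norm W (\<lambda>p. lift g p - F p) < d2 \<Longrightarrow> \<bar>\<zeta> g - w\<bar> < e / 2"
      using w e unfolding limit_value_def by (meson half_gt_zero)
    define h where "h = min d1 d2 / 2"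
    have h: "h > 0" "h < d1" "h < d2" using d1 d2 unfolding h_def by auto
    have "hat_norm W (\<lambda>p. lift (approx W F h) p - F p) \<le> h" by (rule approx_hat_norm) (use h F in auto)
    then have "\<bar>\<zeta> (approx W F h) - v\<bar> < e / 2" "\<bar>\<zeta> (approx W F h) - w\<bar> < e / 2"
      using d1(2) d2(2) approx_CcO[OF open_W F h(1)] h by force+
    then show ?thesis by linarith
  qed
  then show ?thesis using field_le_epsilon[of "\<bar>v - w\<bar>" 0] by simp
qed

text \<open>Existence: the integrals of the approximants \<open>approx W F (1 / (n + 1))\<close> form a Cauchy
  sequence, and its limit \<open>v\<close> satisfies \<open>\<bar>\<zeta> g - v\<bar> \<le> Lip * \<parallel>g - F\<parallel>\<close> for all \<open>g \<in> C\<^sub>c(W)\<close>.\<close>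

lemma limit_estimate_exists:
  assumes F: "continuous_map (ocomp W) euclideanreal F" "F None = 0"
  obtains v where "\<And>g. g \<in> CcO W \<Longrightarrow> \<bar>\<zeta> g - v\<bar> \<le> Lip * hat_norm W (\<lambda>p. lift g p - F p)"
proof -
  define \<delta> where "\<delta> n = inverse (real (Suc n))" for n
  define a where "a n = approx W F (\<delta> n)" for n
  have \<delta>_pos: "\<delta> n > 0" for n unfolding \<delta>_def by simp
  have \<delta>_null: "\<delta> \<longlonglongrightarrow> 0" unfolding \<delta>_def[abs_def] by (rule LIMSEQ_inverse_real_of_nat)
  have aC: "a n \<in> CcO W" for n unfolding a_def by (rule approx_CcO[OF open_W F \<delta>_pos])
  have a_close: "hat_norm W (\<lambda>p. lift (a n) p - F p) \<le> \<delta> n" for n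
    unfolding a_def by (rule approx_hat_norm) (use \<delta>_pos F in \<open>auto intro: less_imp_le\<close>)
  have dist_a: "\<bar>\<zeta> g - \<zeta> (a n)\<bar> \<le> Lip * (hat_norm W (\<lambda>p. lift g p - F p) + \<delta> n)"
    if g: "g \<in> CcO W" for g n
  proof -
    have "\<bar>\<zeta> g - \<zeta> (a n)\<bar>
        \<le> Lip * (hat_norm W (\<lambda>p. lift g p - F p) + hat_norm W (\<lambda>p. lift (a n) p - F p))"
      by (rule zeta_dist_via[OF F(1) g aC])
    also have "\<dots> \<le> Lip * (hat_norm W (\<lambda>p. lift g p - F p) + \<delta> n)"
      using a_close[of n] Lip_nonneg by (intro mult_left_mono add_left_mono)
    finally show ?thesis .
  qed
  have "Cauchy (\<lambda>n. \<zeta> (a n))"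
  proof (rule Cauchy_by_null_sequence)
    show "(\<lambda>n. Lip * \<delta> n) \<longlonglongrightarrow> 0" using tendsto_mult_right_zero[OF \<delta>_null] by simp
    show "\<bar>\<zeta> (a m) - \<zeta> (a n)\<bar> \<le> Lip * \<delta> m + Lip * \<delta> n" for m n
    proof -
      have "\<bar>\<zeta> (a m) - \<zeta> (a n)\<bar> \<le> Lip * (hat_norm W (\<lambda>p. lift (a m) p - F p) + \<delta> n)"
        by (rule dist_a[OF aC])
      also have "\<dots> \<le> Lip * (\<delta> m + \<delta> n)"
        using a_close[of m] Lip_nonneg by (intro mult_left_mono add_right_mono)
      finally show ?thesis by (simp add: distrib_left)
    qed
  qed
  then obtain v where v: "(\<lambda>n. \<zeta> (a n)) \<longlonglongrightarrow> v" using Cauchy_convergent_iff convergent_def by blast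
  have "\<bar>\<zeta> g - v\<bar> \<le> Lip * hat_norm W (\<lambda>p. lift g p - F p)" if g: "g \<in> CcO W" for g
  proof (rule LIMSEQ_le)
    show "(\<lambda>n. \<bar>\<zeta> g - \<zeta> (a n)\<bar>) \<longlonglongrightarrow> \<bar>\<zeta> g - v\<bar>" by (intro tendsto_intros v)
    show "(\<lambda>n. Lip * (hat_norm W (\<lambda>p. lift g p - F p) + \<delta> n)) \<longlonglongrightarrow> Lip * hat_norm W (\<lambda>p. lift g p - F p)"
      using tendsto_mult_left[OF tendsto_add[OF tendsto_const \<delta>_null]] by simp
  qed (use dist_a[OF g] in auto)
  then show ?thesis using that by blast
qed

lemma zhat0_approx:
  assumes F: "continuous_map (ocomp W) euclideanreal F" "F None = 0" and g: "g \<in> CcO W"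
  shows "\<bar>\<zeta> g - zhat0 \<zeta> W F\<bar> \<le> Lip * hat_norm W (\<lambda>p. lift g p - F p)"
proof -
  obtain v where v: "\<And>g. g \<in> CcO W \<Longrightarrow> \<bar>\<zeta> g - v\<bar> \<le> Lip * hat_norm W (\<lambda>p. lift g p - F p)"
    using limit_estimate_exists[OF F] by blast
  have "limit_value F v" unfolding limit_value_def
  proof (intro allI impI)
    fix e :: real assume e: "e > 0"
    have "\<bar>\<zeta> g - v\<bar> < e" if "g \<in> CcO W" "hat_norm W (\<lambda>p. lift g p - F p) < e / (Lip + 1)" for g
    proof -
      have "Lip * hat_norm W (\<lambda>p. lift g p - F p) \<le> Lip * (e / (Lip + 1))"
        using that(2) Lip_nonneg by (intro mult_left_mono) auto
      also have "\<dots> < e" using e Lip_nonneg by (simp add: field_simps)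
      finally show ?thesis using v[OF that(1)] by linarith
    qed
    moreover have "e / (Lip + 1) > 0" using e Lip_nonneg by simp
    ultimately show "\<exists>d>0. \<forall>g\<in>CcO W. hat_norm W (\<lambda>p. lift g p - F p) < d \<longrightarrow> \<bar>\<zeta> g - v\<bar> < e"
      by blast
  qed
  then have "zhat0 \<zeta> W F = v"
    unfolding zhat0_def limit_value_def[symmetric] using limit_value_unique[OF F] by blast
  then show ?thesis using v[OF g] by simp
qed

end

text \<open>Composition with a continuous \<open>k\<close> commutes with approximation: on the bounded range of
  \<open>G\<close>, \<open>k\<close> is uniformly continuous.\<close>

lemma approx_comp_close:
  assumes "open (W::'a::t2_space set)"
    and G: "continuous_map (ocomp W) euclideanreal G" "G None = 0"
    and k: "continuous_on UNIV (k :: real \<Rightarrow> real)" and e: "e > 0"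
  obtains h0 where "h0 > 0"
    "\<And>h p. 0 < h \<Longrightarrow> h \<le> h0 \<Longrightarrow> p \<in> ocomp_points W \<Longrightarrow> \<bar>k (lift (approx W G h) p) - k (G p)\<bar> \<le> e"
proof -
  obtain B where B: "\<And>p. p \<in> ocomp_points W \<Longrightarrow> \<bar>G p\<bar> \<le> B"
    using ocomp_continuous_bounded[OF assms(1) G(1)] by blast
  define R where "R = \<bar>B\<bar> + 1"
  have "uniformly_continuous_on {-R..R} k"
    using compact_uniformly_continuous[of "{-R..R}" k] k continuous_on_subset by blast
  then obtain \<delta> where \<delta>: "\<delta> > 0"
    "\<And>s t. s \<in> {-R..R} \<Longrightarrow> t \<in> {-R..R} \<Longrightarrow> dist s t < \<delta> \<Longrightarrow> dist (k s) (k t) < e"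
    using e unfolding uniformly_continuous_on_def by metis
  show ?thesis
  proof
    show "min 1 (\<delta> / 2) > 0" using \<delta> by simp
    fix h p assume h: "0 < h" "h \<le> min 1 (\<delta> / 2)" and p: "p \<in> ocomp_points W"
    have close: "\<bar>lift (approx W G h) p - G p\<bar> \<le> h"
      using h by (intro approx_close G(2) p) simp
    moreover have "\<bar>G p\<bar> \<le> \<bar>B\<bar>" using B[OF p] by simp
    ultimately have "lift (approx W G h) p \<in> {-R..R}" "G p \<in> {-R..R}"
      using h unfolding R_def by auto
    from \<delta>(2)[OF this] show "\<bar>k (lift (approx W G h) p) - k (G p)\<bar> \<le> e"
      using close h by (simp add: dist_real_def)
  qed
qed

lemma real_eq_0_by_epsilon:
  fixes X c :: real
  assumes c: "c \<ge> 0" and h: "\<And>e. e > 0 \<Longrightarrow> \<bar>X\<bar> \<le> c * e"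
  shows "X = 0"
proof -
  have "\<bar>X\<bar> \<le> 0 + e" if e: "e > 0" for e
  proof -
    have "\<bar>X\<bar> \<le> c * (e / (c + 1))" using h[of "e / (c + 1)"] e c by simp
    also have "\<dots> \<le> e" using c e by (simp add: field_simps)
    finally show ?thesis by simp
  qed
  then show ?thesis using field_le_epsilon[of "\<bar>X\<bar>" 0] by simp
qed

context quasi_integral_on
begin

lemma zhat0_approx_trunc:
  assumes F: "continuous_map (ocomp W) euclideanreal F" "F None = 0" and h: "h > 0"
  shows "\<bar>\<zeta> (approx W F h) - zhat0 \<zeta> W F\<bar> \<le> Lip * h"
proof -
  have "\<bar>\<zeta> (approx W F h) - zhat0 \<zeta> W F\<bar> \<le> Lip * hat_norm W (\<lambda>p. lift (approx W F h) p - F p)"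
    by (rule zhat0_approx[OF F approx_CcO[OF open_W F h]])
  also have "\<dots> \<le> Lip * h"
    using approx_hat_norm[of h F W] h F(2) Lip_nonneg by (intro mult_left_mono) auto
  finally show ?thesis .
qed

text \<open>Apply the key inequality to the approximants, with a cut-off
  built from \<open>\<bar>F\<bar> + \<bar>H\<bar>\<close>, and pass to the limit.\<close>

lemma zhat0_shift_mono:
  assumes F: "continuous_map (ocomp W) euclideanreal F" "F None = 0"
    and H: "continuous_map (ocomp W) euclideanreal H" "H None = 0"
    and d: "d \<ge> 0" and le: "\<And>p. p \<in> ocomp_points W \<Longrightarrow> F p \<le> H p + d"
  shows "zhat0 \<zeta> W F \<le> zhat0 \<zeta> W H + d * lam"
proof (rule field_le_epsilon)
  fix \<epsilon> :: real assume \<epsilon>: "\<epsilon> > 0"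
  define h where "h = \<epsilon> / (2 * (Lip + 1))"
  have h_pos: "h > 0" using \<epsilon> Lip_nonneg by (simp add: h_def)
  have "Lip * h = \<epsilon> / 2 * (Lip / (Lip + 1))" unfolding h_def by (simp add: field_simps)
  also have "\<dots> \<le> \<epsilon> / 2" using \<epsilon> Lip_nonneg by (intro mult_left_le) auto
  finally have h: "h > 0" "Lip * h + Lip * h \<le> \<epsilon>" using h_pos by linarith+
  define G where "G p = \<bar>F p\<bar> + \<bar>H p\<bar>" for p
  have G: "continuous_map (ocomp W) euclideanreal G" "G None = 0"
    unfolding G_def using F H by (auto intro: continuous_intros)
  obtain e where e: "e \<in> CcO W" "\<And>x. 0 \<le> e x" "\<And>x. e x \<le> 1"
    and e1: "\<And>x. h < \<bar>unlift W G x\<bar> \<Longrightarrow> e x = 1"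
    using cutoff_exists[OF open_W G h(1)] by blast
  have unlift_G: "unlift W G x = \<bar>unlift W F x\<bar> + \<bar>unlift W H x\<bar>" for x
    by (simp add: unlift_def G_def)
  have on_supp: "e x = 1" if "approx W F h x \<noteq> 0 \<or> approx W H h x \<noteq> 0" for x
  proof (rule e1)
    show "h < \<bar>unlift W G x\<bar>"
      using that approx_nonzero[of W F h x] approx_nonzero[of W H h x] unfolding unlift_G by linarith
  qed
  have "\<zeta> (approx W F h) \<le> \<zeta> (approx W H h) + d * lam"
  proof (rule zeta_shift_bound[where e = e])
    show "approx W F h \<in> CcO W" "approx W H h \<in> CcO W"
      using approx_CcO[OF open_W F h(1)] approx_CcO[OF open_W H h(1)] .
    show "approx W F h x \<le> approx W H h x + d" for x
      using h(1) d le by (intro approx_mono) auto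
  qed (use e on_supp d in auto)
  then show "zhat0 \<zeta> W F \<le> zhat0 \<zeta> W H + d * lam + \<epsilon>"
    using zhat0_approx_trunc[OF F h(1)] zhat0_approx_trunc[OF H h(1)] h(2) by linarith
qed

lemma zhat0_comp_close:
  assumes G: "continuous_map (ocomp W) euclideanreal G" "G None = 0" and g: "g \<in> CcO W"
    and k: "continuous_on UNIV k" "k 0 = 0"
    and close: "\<And>p. p \<in> ocomp_points W \<Longrightarrow> \<bar>k (lift g p) - k (G p)\<bar> \<le> e"
  shows "\<bar>\<zeta> (\<lambda>x. k (g x)) - zhat0 \<zeta> W (\<lambda>p. k (G p))\<bar> \<le> Lip * e"
proof -
  have kG: "continuous_map (ocomp W) euclideanreal (\<lambda>p. k (G p))" "(\<lambda>p. k (G p)) None = 0"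
    using continuous_map_compose[OF G(1), of euclideanreal k] k G(2) by (auto simp: o_def)
  have "hat_norm W (\<lambda>p. lift (\<lambda>x. k (g x)) p - k (G p)) \<le> e"
    using close by (intro hat_norm_le) (simp add: lift_comp[of k, OF k(2)])
  then show ?thesis
    using zhat0_approx[OF kG CcO_comp[OF open_W g k]] Lip_nonneg
    by (meson mult_left_mono order_trans)
qed

text \<open>Quasi-linearity on \<open>C\<^sub>0\<close>: approximate \<open>G\<close> by \<open>g \<in> C\<^sub>c(W)\<close>, use quasi-linearity of \<open>\<zeta>\<close>
  at \<open>g\<close>, and control the three composites by uniform continuity.\<close>

lemma zhat0_quasi_linear:
  assumes G: "continuous_map (ocomp W) euclideanreal G" "G None = 0"
    and k1: "continuous_on UNIV k1" "k1 0 = 0" and k2: "continuous_on UNIV k2" "k2 0 = 0"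
  shows "zhat0 \<zeta> W (\<lambda>p. a * k1 (G p) + b * k2 (G p)) =
         a * zhat0 \<zeta> W (\<lambda>p. k1 (G p)) + b * zhat0 \<zeta> W (\<lambda>p. k2 (G p))"
proof -
  define k3 where "k3 t = a * k1 t + b * k2 t" for t
  have k3: "continuous_on UNIV k3" "k3 0 = 0"
    unfolding k3_def using k1 k2 by (auto intro!: continuous_intros)
  let ?z = "\<lambda>k. zhat0 \<zeta> W (\<lambda>p. k (G p))"
  have "\<bar>?z k3 - (a * ?z k1 + b * ?z k2)\<bar> \<le> (2 * Lip * (\<bar>a\<bar> + \<bar>b\<bar>)) * e" if e: "e > 0" for e
  proof -
    obtain h1 where h1: "h1 > 0" "\<And>h p. 0 < h \<Longrightarrow> h \<le> h1 \<Longrightarrow> p \<in> ocomp_points W \<Longrightarrow>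
        \<bar>k1 (lift (approx W G h) p) - k1 (G p)\<bar> \<le> e"
      using approx_comp_close[OF open_W G k1(1) e] by blast
    obtain h2 where h2: "h2 > 0" "\<And>h p. 0 < h \<Longrightarrow> h \<le> h2 \<Longrightarrow> p \<in> ocomp_points W \<Longrightarrow>
        \<bar>k2 (lift (approx W G h) p) - k2 (G p)\<bar> \<le> e"
      using approx_comp_close[OF open_W G k2(1) e] by blast
    define g where "g = approx W G (min h1 h2)"
    have gC: "g \<in> CcO W" unfolding g_def using h1 h2 by (intro approx_CcO[OF open_W G]) simp
    have close1: "\<bar>k1 (lift g p) - k1 (G p)\<bar> \<le> e"
      and close2: "\<bar>k2 (lift g p) - k2 (G p)\<bar> \<le> e" if "p \<in> ocomp_points W" for p
      unfolding g_def using h1 h2 that by auto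
    have close3: "\<bar>k3 (lift g p) - k3 (G p)\<bar> \<le> (\<bar>a\<bar> + \<bar>b\<bar>) * e" if "p \<in> ocomp_points W" for p
    proof -
      have "\<bar>k3 (lift g p) - k3 (G p)\<bar>
          \<le> \<bar>a\<bar> * \<bar>k1 (lift g p) - k1 (G p)\<bar> + \<bar>b\<bar> * \<bar>k2 (lift g p) - k2 (G p)\<bar>"
        unfolding k3_def abs_mult[symmetric] by (rule order_trans[OF _ abs_triangle_ineq])
          (simp add: algebra_simps)
      also have "\<dots> \<le> \<bar>a\<bar> * e + \<bar>b\<bar> * e"
        using close1[OF that] close2[OF that] by (intro add_mono mult_left_mono) auto
      finally show ?thesis by (simp add: algebra_simps)
    qed
    have E1: "\<bar>\<zeta> (\<lambda>x. k1 (g x)) - ?z k1\<bar> \<le> Lip * e"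
      by (rule zhat0_comp_close[OF G gC k1 close1])
    have E2: "\<bar>\<zeta> (\<lambda>x. k2 (g x)) - ?z k2\<bar> \<le> Lip * e"
      by (rule zhat0_comp_close[OF G gC k2 close2])
    have E3: "\<bar>\<zeta> (\<lambda>x. k3 (g x)) - ?z k3\<bar> \<le> Lip * ((\<bar>a\<bar> + \<bar>b\<bar>) * e)"
      by (rule zhat0_comp_close[OF G gC k3 close3])
    have lin: "\<zeta> (\<lambda>x. k3 (g x)) = a * \<zeta> (\<lambda>x. k1 (g x)) + b * \<zeta> (\<lambda>x. k2 (g x))"
      unfolding k3_def by (rule zeta_linear[OF CcO_Cc[OF open_W gC] k1 k2])
    have "\<bar>a * (\<zeta> (\<lambda>x. k1 (g x)) - ?z k1)\<bar> \<le> \<bar>a\<bar> * (Lip * e)"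
      "\<bar>b * (\<zeta> (\<lambda>x. k2 (g x)) - ?z k2)\<bar> \<le> \<bar>b\<bar> * (Lip * e)"
      using E1 E2 by (simp_all add: abs_mult mult_left_mono)
    then show ?thesis using E3 lin by (simp add: algebra_simps abs_le_iff)
  qed
  then have "?z k3 - (a * ?z k1 + b * ?z k2) = 0"
    using Lip_nonneg by (intro real_eq_0_by_epsilon[of "2 * Lip * (\<bar>a\<bar> + \<bar>b\<bar>)"]) auto
  then show ?thesis unfolding k3_def by simp
qed

lemma C0_part:
  assumes "continuous_map (ocomp W) euclideanreal f"
  shows "continuous_map (ocomp W) euclideanreal (\<lambda>p. f p - f None)" "(\<lambda>p. f p - f None) None = 0"
  using assms by (auto intro: continuous_intros)

lemma zhat_mono:
  assumes f: "continuous_map (ocomp W) euclideanreal f" and h: "continuous_map (ocomp W) euclideanreal h"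
    and le: "\<And>p. p \<in> ocomp_points W \<Longrightarrow> f p \<le> h p"
  shows "zhat \<zeta> W f \<le> zhat \<zeta> W h"
proof -
  define d where "d = h None - f None"
  have d: "d \<ge> 0" using le[of None] unfolding d_def by simp
  have "zhat0 \<zeta> W (\<lambda>p. f p - f None) \<le> zhat0 \<zeta> W (\<lambda>p. h p - h None) + d * lam"
    using le by (intro zhat0_shift_mono[OF C0_part[OF f] C0_part[OF h] d]) (auto simp: d_def)
  then show ?thesis unfolding zhat_def d_def by (simp add: algebra_simps)
qed

lemma zhat_add_const: "zhat \<zeta> W (\<lambda>p. h p + t) = zhat \<zeta> W h + lam * t"
  unfolding zhat_def by (simp add: algebra_simps)

text \<open>Monotonicity and translation by constants give the Lipschitz bound with constant \<open>\<lambda>\<close>.\<close>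

lemma zhat_lipschitz:
  assumes f: "continuous_map (ocomp W) euclideanreal f" and h: "continuous_map (ocomp W) euclideanreal h"
  shows "\<bar>zhat \<zeta> W f - zhat \<zeta> W h\<bar> \<le> lam * hat_norm W (\<lambda>p. f p - h p)"
proof -
  have one_side: "zhat \<zeta> W f - zhat \<zeta> W h \<le> lam * hat_norm W (\<lambda>p. f p - h p)"
    if f: "continuous_map (ocomp W) euclideanreal f" and h: "continuous_map (ocomp W) euclideanreal h"
    for f h
  proof -
    define t where "t = hat_norm W (\<lambda>p. f p - h p)"
    have fh: "continuous_map (ocomp W) euclideanreal (\<lambda>p. f p - h p)"
      using f h by (intro continuous_intros)
    obtain B where B: "\<And>p. p \<in> ocomp_points W \<Longrightarrow> \<bar>f p - h p\<bar> \<le> B"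
      using ocomp_continuous_bounded[OF open_W fh] by blast
    have "f p \<le> h p + t" if "p \<in> ocomp_points W" for p
    proof -
      have "\<bar>f p - h p\<bar> \<le> t" unfolding t_def using B that by (rule hat_norm_upper)
      then show ?thesis by linarith
    qed
    then have "zhat \<zeta> W f \<le> zhat \<zeta> W (\<lambda>p. h p + t)"
      using h by (intro zhat_mono[OF f]) (auto intro: continuous_intros)
    then show ?thesis unfolding zhat_add_const t_def by simp
  qed
  show ?thesis
    using one_side[OF f h] one_side[OF h f] hat_norm_commute[of W h f] by (simp add: abs_le_iff)
qed

text \<open>Quasi-linearity for arbitrary continuous \<open>\<phi>, \<psi>\<close>: subtract the values at infinity,
  apply \<open>zhat0_quasi_linear\<close> to \<open>f - f \<infinity>\<close>, and note that the constants balance out.\<close>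

lemma zhat_quasi_linear:
  assumes f: "continuous_map (ocomp W) euclideanreal f"
    and \<phi>: "continuous_on UNIV \<phi>" and \<psi>: "continuous_on UNIV \<psi>"
  shows "zhat \<zeta> W (\<lambda>p. a * \<phi> (f p) + b * \<psi> (f p)) = a * zhat \<zeta> W (\<phi> \<circ> f) + b * zhat \<zeta> W (\<psi> \<circ> f)"
proof -
  define c where "c = f None"
  define G where "G p = f p - c" for p
  define k1 where "k1 t = \<phi> (t + c) - \<phi> c" for t
  define k2 where "k2 t = \<psi> (t + c) - \<psi> c" for t
  have G: "continuous_map (ocomp W) euclideanreal G" "G None = 0"
    using C0_part[OF f] unfolding G_def c_def by auto
  have k1: "continuous_on UNIV k1" "k1 0 = 0" unfolding k1_def
    by (auto intro!: continuous_intros intro: continuous_on_compose2[OF \<phi>])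
  have k2: "continuous_on UNIV k2" "k2 0 = 0" unfolding k2_def
    by (auto intro!: continuous_intros intro: continuous_on_compose2[OF \<psi>])
  have C0_parts: "(\<lambda>p. (a * \<phi> (f p) + b * \<psi> (f p)) - (a * \<phi> (f None) + b * \<psi> (f None)))
      = (\<lambda>p. a * k1 (G p) + b * k2 (G p))"
    "(\<lambda>p. (\<phi> \<circ> f) p - (\<phi> \<circ> f) None) = (\<lambda>p. k1 (G p))"
    "(\<lambda>p. (\<psi> \<circ> f) p - (\<psi> \<circ> f) None) = (\<lambda>p. k2 (G p))"
    unfolding k1_def k2_def G_def c_def by (simp_all add: algebra_simps)
  show ?thesis
    unfolding zhat_def C0_parts zhat0_quasi_linear[OF G k1 k2] by (simp add: algebra_simps c_def)
qed

end

theorem lemma2p3: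
  fixes \<zeta> :: "('a::t2_space \<Rightarrow> real) \<Rightarrow> real" and W :: "'a set"
  assumes "locally_compact_space (euclidean :: 'a topology)"
    and "quasi_integral \<zeta>"
    and "open W" and "compact (closure W)"
  shows "(\<forall>f h. continuous_map (ocomp W) euclideanreal f \<and> continuous_map (ocomp W) euclideanreal h
            \<and> (\<forall>p\<in>topspace (ocomp W). f p \<le> h p) \<longrightarrow> zhat \<zeta> W f \<le> zhat \<zeta> W h)
      \<and> (\<exists>N\<ge>0. \<forall>f h. continuous_map (ocomp W) euclideanreal f \<and> continuous_map (ocomp W) euclideanreal h
            \<longrightarrow> \<bar>zhat \<zeta> W f - zhat \<zeta> W h\<bar> \<le> N * hat_norm W (\<lambda>p. f p - h p))
      \<and> (\<forall>f. continuous_map (ocomp W) euclideanreal f \<longrightarrow>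
           (\<forall>\<phi> \<psi> :: real \<Rightarrow> real. \<forall>a b :: real. continuous_on UNIV \<phi> \<and> continuous_on UNIV \<psi> \<longrightarrow>
              zhat \<zeta> W (\<lambda>p. a * \<phi> (f p) + b * \<psi> (f p)) = a * zhat \<zeta> W (\<phi> \<circ> f) + b * zhat \<zeta> W (\<psi> \<circ> f)))"
proof -
  interpret quasi_integral_on \<zeta> W using assms by unfold_locales
  have "zhat \<zeta> W f \<le> zhat \<zeta> W h"
    if "continuous_map (ocomp W) euclideanreal f" "continuous_map (ocomp W) euclideanreal h"
      "\<forall>p\<in>topspace (ocomp W). f p \<le> h p" for f h
    using that topspace_ocomp[OF open_W] by (intro zhat_mono) auto
  moreover have "\<exists>N\<ge>0. \<forall>f h. continuous_map (ocomp W) euclideanreal f \<and> continuous_map (ocomp W) euclideanreal h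
      \<longrightarrow> \<bar>zhat \<zeta> W f - zhat \<zeta> W h\<bar> \<le> N * hat_norm W (\<lambda>p. f p - h p)"
    using zhat_lipschitz lam_nonneg by blast
  ultimately show ?thesis using zhat_quasi_linear by blast
qed

end
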